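(* Let $-\frac1n<\alpha<0$, $\beta_1\ge0$, $\beta_2\in\mathbb{R}$, and let $f=(1-\alpha\varphi)^{1/\alpha}\in\mathcal{C}^+_\alpha(\mathbb{R}^n)$ with $o\in\mathrm{int}(K_f)$. For $t>0$ small, let $\widehat{f_t}=\big(1-\alpha[(1+\beta_1t)\varphi^*]^*+\alpha\beta_2t\big)^{1/\alpha}$ and, for $u\in S^{n-1}$, $$E_t(u)=\int_0^{+\infty}\frac{\widehat{f_t}(ru)-f(ru)}{t}\,r^{n-1}\,dr.$$ Then $\lim_{t\to0^+}E_t(u)$ exists for almost every $u\in S^{n-1}$, and $$\lim_{t\to0^+}\int_{S^{n-1}}E_t(u)\,du=\int_{S^{n-1}}\lim_{t\to0^+}E_t(u)\,du .$$
   Context: $\mathrm{Conv}(\mathbb{R}^n)$ is the set of proper, convex, lower semi-continuous $\varphi:\mathbb{R}^n\to\mathbb{R}\cup\{+\infty\}$; $\varphi$ is coercive if $\liminf_{|x|\to\infty}\varphi(x)/|x|>0$. For $\alpha<0$, $\mathcal{C}^+_\alpha(\mathbb{R}^n)$ is the set of $f=(1-\alpha\varphi)^{1/\alpha}$ with $\varphi\in\mathrm{Conv}(\mathbb{R}^n)$ nonnegative and coercive (convention: $f=0$ where $\varphi=+\infty$). $K_f=\overline{\mathrm{dom}\,\varphi}$. $\varphi^*$ denotes the Legendre transform, so $[(1+s)\varphi^*]^*(x)=(1+s)\varphi(x/(1+s))$ for $s>-1$. $du$ is the surface measure on the unit sphere $S^{n-1}$. *)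

theory Defs
  imports "HOL-Analysis.Analysis"
begin

definition edom :: "('a \<Rightarrow> ereal) \<Rightarrow> 'a set" where
  "edom \<phi> = {x. \<phi> x \<noteq> \<infinity>}"

definition proper_fn :: "('a \<Rightarrow> ereal) \<Rightarrow> bool" where
  "proper_fn \<phi> \<longleftrightarrow> (\<forall>x. \<phi> x \<noteq> -\<infinity>) \<and> (\<exists>x. \<phi> x \<noteq> \<infinity>)"

definition convex_efn :: "('a::real_vector \<Rightarrow> ereal) \<Rightarrow> bool" where
  "convex_efn \<phi> \<longleftrightarrow> convex_on (edom \<phi>) (\<lambda>x. real_of_ereal (\<phi> x))"

definition lsc_fn :: "('a::topological_space \<Rightarrow> ereal) \<Rightarrow> bool" where
  "lsc_fn \<phi> \<longleftrightarrow> (\<forall>x. \<phi> x \<le> Liminf (at x) \<phi>)"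

definition Conv :: "('a::euclidean_space \<Rightarrow> ereal) set" where
  "Conv = {\<phi>. proper_fn \<phi> \<and> convex_efn \<phi> \<and> lsc_fn \<phi>}"

definition coercive :: "('a::real_normed_vector \<Rightarrow> ereal) \<Rightarrow> bool" where
  "coercive \<phi> \<longleftrightarrow> Liminf at_infinity (\<lambda>x. \<phi> x / ereal (norm x)) > 0"

definition legendre :: "('a::real_inner \<Rightarrow> ereal) \<Rightarrow> 'a \<Rightarrow> ereal" where
  "legendre \<phi> y = (SUP x. ereal (inner x y) - \<phi> x)"

definition alpha_fn :: "real \<Rightarrow> ('a \<Rightarrow> ereal) \<Rightarrow> 'a \<Rightarrow> real" where
  "alpha_fn \<alpha> \<psi> x = (if \<psi> x = \<infinity> then 0
      else (1 - \<alpha> * real_of_ereal (\<psi> x)) powr (1 / \<alpha>))"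

definition C_alpha_plus :: "real \<Rightarrow> ('a::euclidean_space \<Rightarrow> real) set" where
  "C_alpha_plus \<alpha> = {alpha_fn \<alpha> \<phi> | \<phi>. \<phi> \<in> Conv \<and> (\<forall>x. \<phi> x \<ge> 0) \<and> coercive \<phi>}"

definition Kset :: "('a::topological_space \<Rightarrow> ereal) \<Rightarrow> 'a set" where
  "Kset \<phi> = closure (edom \<phi>)"

definition hat_f :: "real \<Rightarrow> real \<Rightarrow> real \<Rightarrow> ('a::euclidean_space \<Rightarrow> ereal) \<Rightarrow> real \<Rightarrow> 'a \<Rightarrow> real" where
  "hat_f \<alpha> \<beta>1 \<beta>2 \<phi> t = alpha_fn \<alpha>
     (\<lambda>x. legendre (\<lambda>y. ereal (1 + \<beta>1 * t) * legendre \<phi> y) x - ereal (\<beta>2 * t))"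

text \<open>Surface (Hausdorff) measure on the unit sphere, defined by the cone-volume formula
  sigma(A) = n * vol {r u. 0 <= r <= 1, u in A}, i.e. the push-forward of n times
  Lebesgue measure on the unit ball under radial projection.\<close>
definition sphere_measure :: "'a::euclidean_space measure" where
  "sphere_measure = distr (density (restrict_space lborel (ball 0 1)) (\<lambda>_. ennreal (real DIM('a))))
      (restrict_space borel (sphere 0 1)) (\<lambda>x. x /\<^sub>R norm x)"

definition E_fn :: "real \<Rightarrow> real \<Rightarrow> real \<Rightarrow> ('a::euclidean_space \<Rightarrow> ereal) \<Rightarrow> real \<Rightarrow> 'a \<Rightarrow> real" where
  "E_fn \<alpha> \<beta>1 \<beta>2 \<phi> t u = (LBINT r:{0<..}.
     (hat_f \<alpha> \<beta>1 \<beta>2 \<phi> t (r *\<^sub>R u) - alpha_fn \<alpha> \<phi> (r *\<^sub>R u)) / t * r ^ (DIM('a) - 1))"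

end

theory Submission
  imports Defs
begin

text \<open>
  By the Fenchel--Moreau theorem, \<open>[(1 + \<beta>1 t) \<phi>\<^sup>*]\<^sup>* x = (1 + \<beta>1 t) \<phi> (x / (1 + \<beta>1 t))\<close>.
  Substituting \<open>r = (1 + \<beta>1 t) \<rho>\<close> turns \<open>E\<^sub>t(u)\<close> into the integral over \<open>\<rho> > 0\<close> of
  \<open>(g(t) - g(0)) / t \<cdot> \<rho>\<^sup>n\<^sup>-\<^sup>1\<close>, where \<open>v = \<phi> (\<rho> u)\<close> and
  \<open>g(t) = (1 + \<beta>1 t)\<^sup>n (1 - \<alpha> ((1 + \<beta>1 t) v - \<beta>2 t))\<^bsup>1/\<alpha>\<^esup>\<close>.
  For small \<open>t\<close> the mean value theorem bounds these difference quotients by a constant times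
  \<open>((1 - \<alpha> v) / 2)\<^bsup>1/\<alpha>\<^esup> \<rho>\<^sup>n\<^sup>-\<^sup>1\<close>, and the linear growth of the coercive \<open>\<phi>\<close> bounds this
  by a multiple of \<open>(1 + \<rho>)\<^bsup>1/\<alpha> + n - 1\<^esup>\<close>, which is integrable since \<open>\<alpha> > -1/n\<close>.
  Dominated convergence, first in \<open>\<rho>\<close> and then over the sphere (a finite measure, with a bound
  uniform in \<open>u\<close>), gives both claims.
\<close>

section \<open>Lower semicontinuous convex functions\<close>

lemma lsc_fn_open_superlevel:
  fixes \<phi> :: "'a::topological_space \<Rightarrow> ereal"
  assumes "lsc_fn \<phi>"
  shows "open {x. y < \<phi> x}"
proof (subst open_subopen, intro ballI)
  fix x assume x: "x \<in> {x. y < \<phi> x}"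
  then have "y < Liminf (at x) \<phi>"
    using assms unfolding lsc_fn_def by (metis mem_Collect_eq order_less_le_trans)
  then have "eventually (\<lambda>z. y < \<phi> z) (at x)"
    by (rule less_LiminfD)
  then obtain T where T: "open T" "x \<in> T" "\<forall>z\<in>T. z \<noteq> x \<longrightarrow> y < \<phi> z"
    unfolding eventually_at_topological by auto
  have "T \<subseteq> {x. y < \<phi> x}"
    using T(3) x by auto
  with T(1,2) show "\<exists>T. open T \<and> x \<in> T \<and> T \<subseteq> {x. y < \<phi> x}"
    by auto
qed

lemma lsc_fn_borel_measurable:
  fixes \<phi> :: "'a::topological_space \<Rightarrow> ereal"
  assumes "lsc_fn \<phi>"
  shows "\<phi> \<in> borel_measurable borel"
  by (rule borel_measurableI_greater) (simp add: lsc_fn_open_superlevel[OF assms])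

lemma closed_epigraph_lsc:
  fixes \<phi> :: "'a::topological_space \<Rightarrow> ereal"
  assumes "lsc_fn \<phi>"
  shows "closed {p. \<phi> (fst p) \<le> ereal (snd p)}"
proof -
  have "- {p. \<phi> (fst p) \<le> ereal (snd p)} = (\<Union>q. {x. ereal q < \<phi> x} \<times> {..<q})"
  proof (intro set_eqI iffI)
    fix p :: "'a \<times> real"
    assume "p \<in> - {p. \<phi> (fst p) \<le> ereal (snd p)}"
    then have "ereal (snd p) < \<phi> (fst p)"
      by (simp add: not_le)
    then obtain q where "ereal (snd p) < ereal q" "ereal q < \<phi> (fst p)"
      using ereal_dense2 by blast
    then show "p \<in> (\<Union>q. {x. ereal q < \<phi> x} \<times> {..<q})"
      by (cases p) auto
  next
    fix p :: "'a \<times> real"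
    assume "p \<in> (\<Union>q. {x. ereal q < \<phi> x} \<times> {..<q})"
    then obtain q where "ereal q < \<phi> (fst p)" "snd p < q"
      by (cases p) auto
    then have "ereal (snd p) < \<phi> (fst p)"
      by (metis less_ereal.simps(1) less_trans)
    then show "p \<in> - {p. \<phi> (fst p) \<le> ereal (snd p)}"
      by (simp add: not_le)
  qed
  moreover have "open (\<Union>q. {x. ereal q < \<phi> x} \<times> {..<q})"
    by (intro open_UN ballI open_Times lsc_fn_open_superlevel[OF assms] open_lessThan)
  ultimately show ?thesis
    by (simp add: closed_def)
qed

lemma epigraph_edom:
  assumes "\<forall>x. \<phi> x \<noteq> -\<infinity>"
  shows "epigraph (edom \<phi>) (\<lambda>x. real_of_ereal (\<phi> x)) = {p. \<phi> (fst p) \<le> ereal (snd p)}"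
proof (intro set_eqI)
  fix p :: "'a \<times> real"
  show "p \<in> epigraph (edom \<phi>) (\<lambda>x. real_of_ereal (\<phi> x)) \<longleftrightarrow> p \<in> {p. \<phi> (fst p) \<le> ereal (snd p)}"
    using assms[rule_format, of "fst p"]
    by (cases "\<phi> (fst p)") (auto simp: epigraph_def edom_def)
qed

lemma convex_epigraph_Conv:
  assumes "\<phi> \<in> Conv"
  shows "convex {p. \<phi> (fst p) \<le> ereal (snd p)}"
proof -
  have "\<forall>x. \<phi> x \<noteq> -\<infinity>" "convex_on (edom \<phi>) (\<lambda>x. real_of_ereal (\<phi> x))"
    using assms unfolding Conv_def proper_fn_def convex_efn_def by auto
  then show ?thesis
    using convex_epigraphI epigraph_edom by metis
qed

lemma closed_epigraph_Conv:
  assumes "\<phi> \<in> Conv"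
  shows "closed {p. \<phi> (fst p) \<le> ereal (snd p)}"
  using assms closed_epigraph_lsc unfolding Conv_def by blast

lemma epigraph_separating_hyperplane:
  fixes \<phi> :: "'a::euclidean_space \<Rightarrow> ereal"
  assumes "\<phi> \<in> Conv" "ereal a < \<phi> x0"
  shows "\<exists>y l b. 0 \<le> l \<and> inner y x0 + l * a < b
    \<and> (\<forall>z m. \<phi> z \<le> ereal m \<longrightarrow> b < inner y z + l * m)"
proof -
  have "(x0, a) \<notin> {p. \<phi> (fst p) \<le> ereal (snd p)}"
    using assms(2) by auto
  then obtain w b where below: "inner w (x0, a) < b"
    and above: "\<forall>p\<in>{p. \<phi> (fst p) \<le> ereal (snd p)}. b < inner w p"
    using separating_hyperplane_closed_point[OF convex_epigraph_Conv closed_epigraph_Conv, OF assms(1,1)]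
    by blast
  obtain y l where w: "w = (y, l)"
    by (cases w)
  have sep: "b < inner y z + l * m" if "\<phi> z \<le> ereal m" for z m
    using above that by (auto simp: w)
  obtain z1 where "\<phi> z1 \<noteq> \<infinity>" "\<phi> z1 \<noteq> -\<infinity>"
    using assms(1) unfolding Conv_def proper_fn_def by auto
  then obtain m1 where z1: "\<phi> z1 = ereal m1"
    by (cases "\<phi> z1") auto
  have "0 \<le> l"
  proof (rule ccontr)
    assume "\<not> 0 \<le> l"
    define m where "m = max m1 ((b - inner y z1) / l)"
    have "b < inner y z1 + l * m"
      by (rule sep) (simp add: z1 m_def)
    moreover have "l * m \<le> l * ((b - inner y z1) / l)"
      using \<open>\<not> 0 \<le> l\<close> by (intro mult_left_mono_neg) (auto simp: m_def)
    ultimately show False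
      using \<open>\<not> 0 \<le> l\<close> by simp
  qed
  moreover have "inner y x0 + l * a < b"
    using below by (simp add: w)
  ultimately show ?thesis
    using sep by (intro exI[of _ y] exI[of _ l] exI[of _ b]) simp
qed

lemma affine_minorant_Conv:
  fixes \<phi> :: "'a::euclidean_space \<Rightarrow> ereal"
  assumes "\<phi> \<in> Conv" "\<forall>x. 0 \<le> \<phi> x" "ereal a < \<phi> x0"
  obtains y B where "\<And>z. ereal (inner z y - B) \<le> \<phi> z" "a < inner x0 y - B"
proof -
  obtain y l b where "0 \<le> l" and below: "inner y x0 + l * a < b"
    and above: "\<And>z m. \<phi> z \<le> ereal m \<Longrightarrow> b < inner y z + l * m"
    using epigraph_separating_hyperplane[OF assms(1,3)] by auto
  have finite: "\<phi> z = ereal (real_of_ereal (\<phi> z))" if "\<phi> z \<noteq> \<infinity>" for z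
    using assms(2) that by (cases "\<phi> z") auto
  show ?thesis
  proof (cases "l = 0")
    case False
    then have "0 < l"
      using \<open>0 \<le> l\<close> by simp
    show ?thesis
    proof (rule that[of "- y /\<^sub>R l" "- b / l"])
      fix z
      show "ereal (inner z (- y /\<^sub>R l) - - b / l) \<le> \<phi> z"
      proof (cases "\<phi> z = \<infinity>")
        case False
        then have "b < inner y z + l * real_of_ereal (\<phi> z)"
          by (intro above eq_refl finite)
        then have "inner z (- y /\<^sub>R l) - - b / l \<le> real_of_ereal (\<phi> z)"
          using \<open>0 < l\<close> by (simp add: field_simps inner_commute)
        then show ?thesis
          by (subst finite[OF False]) simp
      qed simp
      show "a < inner x0 (- y /\<^sub>R l) - - b / l"
        using below \<open>0 < l\<close> by (simp add: field_simps inner_commute)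
    qed
  next
    case True
    \<comment> \<open>vertical hyperplane: as \<open>\<phi> \<ge> 0\<close>, \<open>k (b - \<langle>y, z\<rangle>)\<close> is a minorant for every \<open>k \<ge> 0\<close>\<close>
    define k where "k = (\<bar>a\<bar> + 1) / (b - inner y x0)"
    have "0 < b - inner y x0"
      using below True by simp
    then have "0 < k"
      by (simp add: k_def)
    show ?thesis
    proof (rule that[of "- k *\<^sub>R y" "- k * b"])
      fix z
      show "ereal (inner z (- k *\<^sub>R y) - - k * b) \<le> \<phi> z"
      proof (cases "\<phi> z = \<infinity>")
        case False
        then have "b < inner y z + l * real_of_ereal (\<phi> z)"
          by (intro above eq_refl finite)
        then have "b < inner y z"
          using True by simp
        then have "inner z (- k *\<^sub>R y) - - k * b \<le> 0"
          using \<open>0 < k\<close> by (simp add: inner_commute algebra_simps)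
        then have "ereal (inner z (- k *\<^sub>R y) - - k * b) \<le> 0"
          by (simp add: zero_ereal_def)
        then show ?thesis
          using assms(2) by (meson order_trans)
      qed simp
      have "inner x0 (- k *\<^sub>R y) - - k * b = k * (b - inner y x0)"
        by (simp add: inner_commute algebra_simps)
      also have "\<dots> = \<bar>a\<bar> + 1"
        using \<open>0 < b - inner y x0\<close> by (simp add: k_def)
      finally show "a < inner x0 (- k *\<^sub>R y) - - k * b"
        by simp
    qed
  qed
qed

lemma legendre_scaled_legendre:
  fixes \<phi> :: "'a::euclidean_space \<Rightarrow> ereal"
  assumes "\<phi> \<in> Conv" "\<forall>x. 0 \<le> \<phi> x" "0 < c"
  shows "legendre (\<lambda>y. ereal c * legendre \<phi> y) x = ereal c * \<phi> (x /\<^sub>R c)"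
proof (rule antisym)
  show "legendre (\<lambda>y. ereal c * legendre \<phi> y) x \<le> ereal c * \<phi> (x /\<^sub>R c)"
    unfolding legendre_def[of "\<lambda>y. ereal c * legendre \<phi> y"]
  proof (rule SUP_least)
    fix y
    have young: "ereal (inner (x /\<^sub>R c) y) - \<phi> (x /\<^sub>R c) \<le> legendre \<phi> y"
      unfolding legendre_def by (rule SUP_upper) simp
    show "ereal (inner y x) - ereal c * legendre \<phi> y \<le> ereal c * \<phi> (x /\<^sub>R c)"
    proof (cases "\<phi> (x /\<^sub>R c)")
      case (real v)
      show ?thesis
      proof (cases "legendre \<phi> y")
        case (real w)
        then have "inner (x /\<^sub>R c) y - v \<le> w"
          using young \<open>\<phi> (x /\<^sub>R c) = ereal v\<close> by simp
        then have "inner y x - c * w \<le> c * v"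
          using assms(3) by (simp add: field_simps inner_commute)
        then show ?thesis
          using real \<open>\<phi> (x /\<^sub>R c) = ereal v\<close> by simp
      next
        case MInf
        then show ?thesis
          using young \<open>\<phi> (x /\<^sub>R c) = ereal v\<close> by simp
      qed (use assms(3) in simp)
    next
      case MInf
      moreover have "0 \<le> \<phi> (x /\<^sub>R c)"
        using assms(2) by blast
      ultimately show ?thesis
        by simp
    qed (use assms(3) in simp)
  qed
next
  show "ereal c * \<phi> (x /\<^sub>R c) \<le> legendre (\<lambda>y. ereal c * legendre \<phi> y) x"
  proof (rule dense_le)
    fix e
    assume e: "e < ereal c * \<phi> (x /\<^sub>R c)"
    show "e \<le> legendre (\<lambda>y. ereal c * legendre \<phi> y) x"
    proof (cases e)
      case (real a)
      have "ereal (a / c) < \<phi> (x /\<^sub>R c)"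
        using e real assms(2,3) by (cases "\<phi> (x /\<^sub>R c)") (auto simp: field_simps)
      then obtain Y B where minorant: "\<And>z. ereal (inner z Y - B) \<le> \<phi> z"
        and above: "a / c < inner (x /\<^sub>R c) Y - B"
        using affine_minorant_Conv[OF assms(1,2)] by blast
      have "legendre \<phi> Y \<le> ereal B"
        unfolding legendre_def
      proof (rule SUP_least)
        fix z
        show "ereal (inner z Y) - \<phi> z \<le> ereal B"
          using minorant[of z] by (cases "\<phi> z") auto
      qed
      then have "ereal (inner Y x - c * B) \<le> ereal (inner Y x) - ereal c * legendre \<phi> Y"
        using assms(3) by (cases "legendre \<phi> Y") auto
      also have "\<dots> \<le> legendre (\<lambda>y. ereal c * legendre \<phi> y) x"
        unfolding legendre_def[of "\<lambda>y. ereal c * legendre \<phi> y"] by (rule SUP_upper) simp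
      finally have "ereal (inner Y x - c * B) \<le> legendre (\<lambda>y. ereal c * legendre \<phi> y) x" .
      moreover have "a < inner Y x - c * B"
        using above assms(3) by (simp add: field_simps inner_commute)
      ultimately show ?thesis
        using real by (metis ereal_less_eq(3) less_imp_le order.trans)
    qed (use e in simp_all)
  qed
qed

lemma coercive_linear_lower_bound:
  fixes \<phi> :: "'a::real_normed_vector \<Rightarrow> ereal"
  assumes "coercive \<phi>"
  obtains c R where "0 < c" "0 < R" "\<And>x. R \<le> norm x \<Longrightarrow> ereal (c * norm x) \<le> \<phi> x"
proof -
  obtain z where z: "0 < z" "z < Liminf at_infinity (\<lambda>x. \<phi> x / ereal (norm x))"
    using assms dense unfolding coercive_def by blast
  obtain c where zc: "z = ereal c"
    using z by (cases z) auto
  have "eventually (\<lambda>x. z < \<phi> x / ereal (norm x)) at_infinity"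
    by (rule less_LiminfD[OF z(2)])
  then obtain b where b: "\<And>x. b \<le> norm x \<Longrightarrow> ereal c < \<phi> x / ereal (norm x)"
    unfolding eventually_at_infinity zc by blast
  have "ereal (c * norm x) \<le> \<phi> x" if "max b 1 \<le> norm x" for x
  proof (cases "\<phi> x")
    case (real v)
    have "0 < norm x"
      using that by linarith
    then have "c < v / norm x"
      using b[of x] that real by simp
    then have "c * norm x < v"
      using \<open>0 < norm x\<close> by (simp add: field_simps)
    then show ?thesis
      using real by simp
  next
    case MInf
    then show ?thesis
      using b[of x] that by simp
  qed simp
  then show ?thesis
    using z zc by (intro that[of c "max b 1"]) auto
qed

section \<open>The perturbed profile\<close>

definition rescaled_hat :: "real \<Rightarrow> real \<Rightarrow> real \<Rightarrow> nat \<Rightarrow> real \<Rightarrow> real \<Rightarrow> real" where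
  "rescaled_hat \<alpha> \<beta>1 \<beta>2 n v t =
     (1 + \<beta>1 * t) ^ n * (1 - \<alpha> * ((1 + \<beta>1 * t) * v - \<beta>2 * t)) powr (1 / \<alpha>)"

definition rescaled_hat_deriv :: "real \<Rightarrow> real \<Rightarrow> real \<Rightarrow> nat \<Rightarrow> real \<Rightarrow> real \<Rightarrow> real" where
  "rescaled_hat_deriv \<alpha> \<beta>1 \<beta>2 n v t =
     real n * \<beta>1 * (1 + \<beta>1 * t) ^ (n - 1) * (1 - \<alpha> * ((1 + \<beta>1 * t) * v - \<beta>2 * t)) powr (1 / \<alpha>)
     - (1 + \<beta>1 * t) ^ n * (1 - \<alpha> * ((1 + \<beta>1 * t) * v - \<beta>2 * t)) powr (1 / \<alpha> - 1) * (\<beta>1 * v - \<beta>2)"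

lemma rescaled_hat_has_derivative:
  assumes "\<alpha> \<noteq> 0" "0 < 1 - \<alpha> * ((1 + \<beta>1 * t) * v - \<beta>2 * t)"
  shows "(rescaled_hat \<alpha> \<beta>1 \<beta>2 n v has_real_derivative rescaled_hat_deriv \<alpha> \<beta>1 \<beta>2 n v t) (at t)"
  unfolding rescaled_hat_def[abs_def] rescaled_hat_deriv_def
  using assms by (auto intro!: derivative_eq_intros simp: field_simps)

definition t_max :: "real \<Rightarrow> real \<Rightarrow> real \<Rightarrow> real" where
  "t_max \<alpha> \<beta>1 \<beta>2 = 1 / (2 * (1 + \<beta>1 + \<bar>\<alpha>\<bar> * \<bar>\<beta>2\<bar>))"

lemma t_max_pos: "0 \<le> \<beta>1 \<Longrightarrow> 0 < t_max \<alpha> \<beta>1 \<beta>2"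
  unfolding t_max_def by (simp add: add_pos_nonneg)

lemma below_t_max:
  assumes "\<alpha> < 0" "0 \<le> \<beta>1" "0 \<le> v" "0 \<le> t" "t \<le> t_max \<alpha> \<beta>1 \<beta>2"
  shows "(1 - \<alpha> * v) / 2 \<le> 1 - \<alpha> * ((1 + \<beta>1 * t) * v - \<beta>2 * t)" and "\<beta>1 * t \<le> 1 / 2"
proof -
  have "t * (2 * (1 + \<beta>1 + \<bar>\<alpha>\<bar> * \<bar>\<beta>2\<bar>)) \<le> 1"
    using assms(2,5) unfolding t_max_def
    by (simp add: field_simps add_pos_nonneg)
  then have small: "2 * t + 2 * (\<beta>1 * t) + 2 * \<bar>\<alpha> * \<beta>2 * t\<bar> \<le> 1"
    using assms(4) by (simp add: algebra_simps abs_mult)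
  moreover have "0 \<le> \<beta>1 * t" "0 \<le> \<bar>\<alpha> * \<beta>2 * t\<bar>"
    using assms by auto
  ultimately show "\<beta>1 * t \<le> 1 / 2"
    using assms(4) by linarith
  from small \<open>0 \<le> \<beta>1 * t\<close> have "- (1 / 2) \<le> \<alpha> * \<beta>2 * t"
    using assms(4) by linarith
  moreover have "\<alpha> * (\<beta>1 * t * v) \<le> 0" "\<alpha> * v \<le> 0"
    using assms by (auto simp: mult_nonpos_nonneg)
  ultimately show "(1 - \<alpha> * v) / 2 \<le> 1 - \<alpha> * ((1 + \<beta>1 * t) * v - \<beta>2 * t)"
    by (simp add: field_simps)
qed

definition quotient_const :: "real \<Rightarrow> real \<Rightarrow> real \<Rightarrow> nat \<Rightarrow> real" where
  "quotient_const \<alpha> \<beta>1 \<beta>2 n = real n * \<beta>1 * 2 ^ (n - 1) + 2 ^ (n + 1) * (\<beta>1 / - \<alpha> + \<bar>\<beta>2\<bar>)"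

lemma quotient_const_nonneg:
  assumes "\<alpha> < 0" "0 \<le> \<beta>1"
  shows "0 \<le> quotient_const \<alpha> \<beta>1 \<beta>2 n"
proof -
  have "0 \<le> \<beta>1 / - \<alpha>"
    using assms by (simp add: divide_nonneg_neg)
  then show ?thesis
    using assms(2) unfolding quotient_const_def by (intro add_nonneg_nonneg mult_nonneg_nonneg) auto
qed

lemma rescaled_hat_deriv_bound:
  assumes "\<alpha> < 0" "0 \<le> \<beta>1" "0 \<le> v" "0 \<le> t" "t \<le> t_max \<alpha> \<beta>1 \<beta>2"
  shows "\<bar>rescaled_hat_deriv \<alpha> \<beta>1 \<beta>2 n v t\<bar> \<le> quotient_const \<alpha> \<beta>1 \<beta>2 n * ((1 - \<alpha> * v) / 2) powr (1 / \<alpha>)"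
proof -
  define P where "P = 1 + \<beta>1 * t"
  define w where "w = 1 - \<alpha> * ((1 + \<beta>1 * t) * v - \<beta>2 * t)"
  define X where "X = (1 - \<alpha> * v) / 2"
  define K where "K = \<beta>1 / - \<alpha> + \<bar>\<beta>2\<bar>"
  have "0 \<le> - \<alpha> * v"
    using assms by (simp add: mult_nonpos_nonneg)
  then have X: "1 / 2 \<le> X"
    by (simp add: X_def)
  have "X \<le> w" "\<beta>1 * t \<le> 1 / 2"
    using below_t_max[OF assms] by (simp_all add: X_def w_def)
  then have P: "1 \<le> P" "P \<le> 2"
    using assms by (simp_all add: P_def)
  have "1 / \<alpha> \<le> 0" "1 / \<alpha> - 1 \<le> 0"
    using assms(1) by (simp_all add: divide_nonpos_neg)
  then have w_powr: "w powr (1 / \<alpha>) \<le> X powr (1 / \<alpha>)" "w powr (1 / \<alpha> - 1) \<le> X powr (1 / \<alpha> - 1)"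
    using X \<open>X \<le> w\<close> by (simp_all add: powr_mono2')
  have "\<beta>1 * v = (\<beta>1 / - \<alpha>) * (- \<alpha> * v)"
    using assms(1) by simp
  also have "\<dots> \<le> (\<beta>1 / - \<alpha>) * (2 * X)"
    using assms(1,2) by (intro mult_left_mono) (auto simp: X_def divide_nonneg_neg)
  finally have "\<beta>1 * v \<le> (\<beta>1 / - \<alpha>) * (2 * X)" .
  moreover have "\<bar>\<beta>2\<bar> \<le> \<bar>\<beta>2\<bar> * (2 * X)"
    using X by (simp add: mult_le_cancel_left1)
  moreover have "\<bar>\<beta>1 * v - \<beta>2\<bar> \<le> \<beta>1 * v + \<bar>\<beta>2\<bar>"
    using mult_nonneg_nonneg[OF assms(2,3)] by (auto simp: abs_if)
  moreover have "K * (2 * X) = (\<beta>1 / - \<alpha>) * (2 * X) + \<bar>\<beta>2\<bar> * (2 * X)"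
    by (simp add: K_def algebra_simps)
  ultimately have diff: "\<bar>\<beta>1 * v - \<beta>2\<bar> \<le> K * (2 * X)"
    by linarith
  have X_powr: "X powr (1 / \<alpha> - 1) * X = X powr (1 / \<alpha>)"
    using X by (simp add: powr_diff)
  have "rescaled_hat_deriv \<alpha> \<beta>1 \<beta>2 n v t
      = real n * \<beta>1 * P ^ (n - 1) * w powr (1 / \<alpha>) - P ^ n * w powr (1 / \<alpha> - 1) * (\<beta>1 * v - \<beta>2)"
    by (simp add: rescaled_hat_deriv_def P_def w_def)
  also have "\<bar>\<dots>\<bar> \<le> real n * \<beta>1 * P ^ (n - 1) * w powr (1 / \<alpha>) + P ^ n * w powr (1 / \<alpha> - 1) * \<bar>\<beta>1 * v - \<beta>2\<bar>"
    using P assms(2) by (intro order.trans[OF abs_triangle_ineq4]) (simp add: abs_mult)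
  also have "\<dots> \<le> real n * \<beta>1 * 2 ^ (n - 1) * X powr (1 / \<alpha>) + 2 ^ n * X powr (1 / \<alpha> - 1) * (K * (2 * X))"
    using P assms(2) w_powr diff
    by (intro add_mono mult_mono power_mono) auto
  also have "\<dots> = real n * \<beta>1 * 2 ^ (n - 1) * X powr (1 / \<alpha>) + 2 ^ (n + 1) * K * (X powr (1 / \<alpha> - 1) * X)"
    by (simp add: algebra_simps)
  also have "\<dots> = quotient_const \<alpha> \<beta>1 \<beta>2 n * X powr (1 / \<alpha>)"
    unfolding X_powr by (simp add: quotient_const_def K_def algebra_simps)
  finally show ?thesis
    by (simp add: X_def)
qed

lemma rescaled_hat_quotient_bound:
  assumes "\<alpha> < 0" "0 \<le> \<beta>1" "0 \<le> v" "0 < t" "t \<le> t_max \<alpha> \<beta>1 \<beta>2"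
  shows "\<bar>(rescaled_hat \<alpha> \<beta>1 \<beta>2 n v t - rescaled_hat \<alpha> \<beta>1 \<beta>2 n v 0) / t\<bar>
    \<le> quotient_const \<alpha> \<beta>1 \<beta>2 n * ((1 - \<alpha> * v) / 2) powr (1 / \<alpha>)"
proof -
  have "(rescaled_hat \<alpha> \<beta>1 \<beta>2 n v has_real_derivative rescaled_hat_deriv \<alpha> \<beta>1 \<beta>2 n v s) (at s)"
    if "0 \<le> s" "s \<le> t" for s
  proof (rule rescaled_hat_has_derivative)
    have "0 < (1 - \<alpha> * v) / 2"
      using assms(1,3) mult_nonpos_nonneg[of \<alpha> v] by simp
    also have "\<dots> \<le> 1 - \<alpha> * ((1 + \<beta>1 * s) * v - \<beta>2 * s)"
      using below_t_max(1)[of \<alpha> \<beta>1 v s \<beta>2] assms that by auto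
    finally show "0 < 1 - \<alpha> * ((1 + \<beta>1 * s) * v - \<beta>2 * s)" .
  qed (use assms(1) in simp)
  then obtain s where "0 < s" "s < t"
    and "rescaled_hat \<alpha> \<beta>1 \<beta>2 n v t - rescaled_hat \<alpha> \<beta>1 \<beta>2 n v 0 = (t - 0) * rescaled_hat_deriv \<alpha> \<beta>1 \<beta>2 n v s"
    using MVT2[OF assms(4)] by blast
  then show ?thesis
    using rescaled_hat_deriv_bound[of \<alpha> \<beta>1 v s \<beta>2 n] assms by simp
qed

lemma rescaled_hat_quotient_tendsto:
  assumes "\<alpha> < 0" "0 \<le> v"
  shows "((\<lambda>t. (rescaled_hat \<alpha> \<beta>1 \<beta>2 n v t - rescaled_hat \<alpha> \<beta>1 \<beta>2 n v 0) / t)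
    \<longlongrightarrow> rescaled_hat_deriv \<alpha> \<beta>1 \<beta>2 n v 0) (at_right 0)"
proof -
  have "0 < 1 - \<alpha> * v"
    using assms mult_nonpos_nonneg[of \<alpha> v] by simp
  then have "(rescaled_hat \<alpha> \<beta>1 \<beta>2 n v has_real_derivative rescaled_hat_deriv \<alpha> \<beta>1 \<beta>2 n v 0) (at 0)"
    using assms(1) by (intro rescaled_hat_has_derivative) auto
  then have "((\<lambda>t. (rescaled_hat \<alpha> \<beta>1 \<beta>2 n v t - rescaled_hat \<alpha> \<beta>1 \<beta>2 n v 0) / (t - 0))
      \<longlongrightarrow> rescaled_hat_deriv \<alpha> \<beta>1 \<beta>2 n v 0) (at 0)"
    unfolding has_field_derivative_iff .
  then show ?thesis
    by (simp add: filterlim_at_split)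
qed

definition hat_profile :: "real \<Rightarrow> real \<Rightarrow> real \<Rightarrow> real \<Rightarrow> ereal \<Rightarrow> real" where
  "hat_profile \<alpha> \<beta>1 \<beta>2 t e =
     (if e = \<infinity> then 0 else (1 - \<alpha> * ((1 + \<beta>1 * t) * real_of_ereal e - \<beta>2 * t)) powr (1 / \<alpha>))"

definition hat_quotient :: "real \<Rightarrow> real \<Rightarrow> real \<Rightarrow> nat \<Rightarrow> real \<Rightarrow> ereal \<Rightarrow> real" where
  "hat_quotient \<alpha> \<beta>1 \<beta>2 n t e = ((1 + \<beta>1 * t) ^ n * hat_profile \<alpha> \<beta>1 \<beta>2 t e - hat_profile \<alpha> \<beta>1 \<beta>2 0 e) / t"

definition hat_quotient_limit :: "real \<Rightarrow> real \<Rightarrow> real \<Rightarrow> nat \<Rightarrow> ereal \<Rightarrow> real" where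
  "hat_quotient_limit \<alpha> \<beta>1 \<beta>2 n e = (if e = \<infinity> then 0 else rescaled_hat_deriv \<alpha> \<beta>1 \<beta>2 n (real_of_ereal e) 0)"

definition envelope :: "real \<Rightarrow> ereal \<Rightarrow> real" where
  "envelope \<alpha> e = (if e = \<infinity> then 0 else ((1 - \<alpha> * real_of_ereal e) / 2) powr (1 / \<alpha>))"

lemma hat_quotient_ereal:
  "hat_quotient \<alpha> \<beta>1 \<beta>2 n t (ereal v) = (rescaled_hat \<alpha> \<beta>1 \<beta>2 n v t - rescaled_hat \<alpha> \<beta>1 \<beta>2 n v 0) / t"
  by (simp add: hat_quotient_def hat_profile_def rescaled_hat_def)

lemma hat_profile_bound:
  assumes "\<alpha> < 0" "0 \<le> \<beta>1" "0 \<le> e" "0 \<le> t" "t \<le> t_max \<alpha> \<beta>1 \<beta>2"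
  shows "\<bar>hat_profile \<alpha> \<beta>1 \<beta>2 t e\<bar> \<le> envelope \<alpha> e"
proof (cases e)
  case (real v)
  then have "0 \<le> v"
    using assms(3) by simp
  have "0 < (1 - \<alpha> * v) / 2"
    using assms(1) \<open>0 \<le> v\<close> mult_nonpos_nonneg[of \<alpha> v] by simp
  moreover have "(1 - \<alpha> * v) / 2 \<le> 1 - \<alpha> * ((1 + \<beta>1 * t) * v - \<beta>2 * t)"
    using below_t_max(1)[OF assms(1,2) \<open>0 \<le> v\<close> assms(4,5)] .
  ultimately show ?thesis
    using real assms(1) by (simp add: hat_profile_def envelope_def powr_mono2' divide_nonpos_neg)
qed (use assms(3) in \<open>simp_all add: hat_profile_def envelope_def\<close>)

lemma hat_quotient_bound:
  assumes "\<alpha> < 0" "0 \<le> \<beta>1" "0 \<le> e" "0 < t" "t \<le> t_max \<alpha> \<beta>1 \<beta>2"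
  shows "\<bar>hat_quotient \<alpha> \<beta>1 \<beta>2 n t e\<bar> \<le> quotient_const \<alpha> \<beta>1 \<beta>2 n * envelope \<alpha> e"
proof (cases e)
  case (real v)
  then show ?thesis
    using rescaled_hat_quotient_bound[OF assms(1,2) _ assms(4,5)] assms(3)
    by (simp add: hat_quotient_ereal envelope_def)
qed (use assms(3) in \<open>simp_all add: hat_quotient_def hat_profile_def envelope_def\<close>)

lemma hat_quotient_tendsto:
  assumes "\<alpha> < 0" "0 \<le> e"
  shows "((\<lambda>t. hat_quotient \<alpha> \<beta>1 \<beta>2 n t e) \<longlongrightarrow> hat_quotient_limit \<alpha> \<beta>1 \<beta>2 n e) (at_right 0)"
proof (cases e)
  case (real v)
  then show ?thesis
    using rescaled_hat_quotient_tendsto[OF assms(1)] assms(2)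
    by (simp add: hat_quotient_ereal hat_quotient_limit_def)
qed (use assms(2) in \<open>simp_all add: hat_quotient_def hat_profile_def hat_quotient_limit_def\<close>)

lemma borel_measurable_hat_profile [measurable]:
  "hat_profile \<alpha> \<beta>1 \<beta>2 t \<in> borel_measurable borel"
  "hat_quotient \<alpha> \<beta>1 \<beta>2 n t \<in> borel_measurable borel"
  "hat_quotient_limit \<alpha> \<beta>1 \<beta>2 n \<in> borel_measurable borel"
  unfolding hat_profile_def[abs_def] hat_quotient_def[abs_def] hat_quotient_limit_def[abs_def]
    rescaled_hat_deriv_def
  by measurable

lemma alpha_fn_eq_hat_profile: "alpha_fn \<alpha> \<phi> x = hat_profile \<alpha> \<beta>1 \<beta>2 0 (\<phi> x)"
  by (simp add: alpha_fn_def hat_profile_def)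

lemma hat_f_eq_hat_profile:
  fixes \<phi> :: "'a::euclidean_space \<Rightarrow> ereal"
  assumes "\<phi> \<in> Conv" "\<forall>x. 0 \<le> \<phi> x" "0 \<le> \<beta>1" "0 \<le> t"
  shows "hat_f \<alpha> \<beta>1 \<beta>2 \<phi> t x = hat_profile \<alpha> \<beta>1 \<beta>2 t (\<phi> (x /\<^sub>R (1 + \<beta>1 * t)))"
proof -
  have "0 < 1 + \<beta>1 * t"
    using assms(3,4) by (simp add: add_pos_nonneg)
  then have "hat_f \<alpha> \<beta>1 \<beta>2 \<phi> t x
      = alpha_fn \<alpha> (\<lambda>x. ereal (1 + \<beta>1 * t) * \<phi> (x /\<^sub>R (1 + \<beta>1 * t)) - ereal (\<beta>2 * t)) x"
    unfolding hat_f_def using legendre_scaled_legendre[OF assms(1,2)] by simp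
  moreover have "0 \<le> \<phi> (x /\<^sub>R (1 + \<beta>1 * t))"
    using assms(2) by blast
  ultimately show ?thesis
    using \<open>0 < 1 + \<beta>1 * t\<close>
    by (cases "\<phi> (x /\<^sub>R (1 + \<beta>1 * t))") (auto simp: alpha_fn_def hat_profile_def)
qed

section \<open>Radial domination\<close>

lemma integrable_shifted_powr:
  fixes q :: real
  assumes "q < -1"
  shows "integrable lborel (\<lambda>\<rho>. indicator {0<..} \<rho> * (1 + \<rho>) powr q)"
proof -
  have "((\<lambda>x::real. x powr q) has_integral - (1 powr (q + 1)) / (q + 1)) {1..}"
    using assms by (intro has_integral_powr_to_inf) auto
  then have "(\<lambda>x::real. x powr q) absolutely_integrable_on {1..}"
    by (intro nonnegative_absolutely_integrable_1) auto
  then have "integrable lborel (\<lambda>x::real. indicator {1..} x *\<^sub>R x powr q)"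
    unfolding set_integrable_def by (simp add: integrable_completion)
  then have "integrable lborel (\<lambda>x::real. indicator {1..} (1 + 1 * x) *\<^sub>R (1 + 1 * x) powr q)"
    using lborel_integrable_real_affine[of _ 1 1] by simp
  then show ?thesis
    by (rule Bochner_Integration.integrable_bound) (auto simp: indicator_def intro!: AE_I2)
qed

lemma envelope_decay:
  assumes "\<alpha> < 0" "0 < c" "0 < R" "0 < \<rho>" "0 \<le> v" "R \<le> \<rho> \<Longrightarrow> c * \<rho> \<le> v"
  shows "((1 - \<alpha> * v) / 2) powr (1 / \<alpha>) * \<rho> ^ n
    \<le> (min (- \<alpha> * c) (1 / (1 + R)) / 2) powr (1 / \<alpha>) * (1 + \<rho>) powr (1 / \<alpha> + real n)"
proof -
  define k where "k = min (- \<alpha> * c) (1 / (1 + R))"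
  have "0 < k"
    using assms(1-3) by (simp add: k_def mult_neg_pos)
  have "k * (1 + \<rho>) \<le> 1 - \<alpha> * v"
  proof (cases "R \<le> \<rho>")
    case True
    have "k \<le> 1 / (1 + R)" "k \<le> - \<alpha> * c"
      by (simp_all add: k_def)
    moreover have "1 / (1 + R) \<le> 1"
      using assms(3) by simp
    ultimately have "k \<le> 1" "k * \<rho> \<le> - \<alpha> * c * \<rho>"
      using assms(4) mult_right_mono[of k "- \<alpha> * c" \<rho>] by auto
    moreover have "- \<alpha> * c * \<rho> \<le> - \<alpha> * v"
      using assms(1) assms(6)[OF True] by (simp add: mult.assoc)
    ultimately show ?thesis
      by (simp add: algebra_simps)
  next
    case False
    have "k * (1 + \<rho>) \<le> 1 / (1 + R) * (1 + R)"
      using assms(3,4) False \<open>0 < k\<close> by (intro mult_mono) (auto simp: k_def)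
    also have "\<dots> \<le> 1 - \<alpha> * v"
      using assms(1,3,5) mult_nonpos_nonneg[of \<alpha> v] by simp
    finally show ?thesis .
  qed
  then have "((1 - \<alpha> * v) / 2) powr (1 / \<alpha>) \<le> (k / 2 * (1 + \<rho>)) powr (1 / \<alpha>)"
    using assms(1,4) \<open>0 < k\<close> by (intro powr_mono2') (auto simp: divide_nonpos_neg)
  also have "\<dots> = (k / 2) powr (1 / \<alpha>) * (1 + \<rho>) powr (1 / \<alpha>)"
    using assms(4) \<open>0 < k\<close> powr_mult[of "k / 2" "1 + \<rho>" "1 / \<alpha>"] by simp
  finally have "((1 - \<alpha> * v) / 2) powr (1 / \<alpha>) * \<rho> ^ n \<le> (k / 2) powr (1 / \<alpha>) * (1 + \<rho>) powr (1 / \<alpha>) * (1 + \<rho>) ^ n"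
    using assms(4) by (intro mult_mono power_mono) auto
  also have "\<dots> = (k / 2) powr (1 / \<alpha>) * (1 + \<rho>) powr (1 / \<alpha> + real n)"
    using assms(4) by (simp add: powr_add powr_realpow)
  finally show ?thesis
    by (simp add: k_def)
qed

lemma radial_envelope_dominated:
  fixes \<phi> :: "'a::euclidean_space \<Rightarrow> ereal"
  assumes "- 1 / real DIM('a) < \<alpha>" "\<alpha> < 0" "\<forall>x. 0 \<le> \<phi> x" "coercive \<phi>"
  obtains G where "integrable lborel G" "\<And>\<rho>. 0 \<le> G \<rho>"
    "\<And>u \<rho>. norm u = 1 \<Longrightarrow> 0 < \<rho> \<Longrightarrow> envelope \<alpha> (\<phi> (\<rho> *\<^sub>R u)) * \<rho> ^ (DIM('a) - 1) \<le> G \<rho>"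
proof -
  obtain c R where "0 < c" "0 < R" and growth: "\<And>x. R \<le> norm x \<Longrightarrow> ereal (c * norm x) \<le> \<phi> x"
    using coercive_linear_lower_bound[OF assms(4)] by blast
  define \<kappa> where "\<kappa> = (min (- \<alpha> * c) (1 / (1 + R)) / 2) powr (1 / \<alpha>)"
  define q where "q = 1 / \<alpha> + real (DIM('a) - 1)"
  have "- 1 < \<alpha> * real DIM('a)"
    using assms(1) by (simp add: field_simps)
  then have "1 / \<alpha> < - real DIM('a)"
    using assms(2) by (simp add: field_simps)
  then have "q < -1"
    by (simp add: q_def of_nat_diff)
  show ?thesis
  proof (rule that[of "\<lambda>\<rho>. \<kappa> * (indicator {0<..} \<rho> * (1 + \<rho>) powr q)"])
    show "integrable lborel (\<lambda>\<rho>. \<kappa> * (indicator {0<..} \<rho> * (1 + \<rho>) powr q))"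
      using integrable_shifted_powr[OF \<open>q < -1\<close>] by simp
    show "0 \<le> \<kappa> * (indicator {0<..} \<rho> * (1 + \<rho>) powr q)" for \<rho>
      by (simp add: \<kappa>_def)
  next
    fix u :: 'a and \<rho> :: real
    assume "norm u = 1" "0 < \<rho>"
    show "envelope \<alpha> (\<phi> (\<rho> *\<^sub>R u)) * \<rho> ^ (DIM('a) - 1) \<le> \<kappa> * (indicator {0<..} \<rho> * (1 + \<rho>) powr q)"
    proof (cases "\<phi> (\<rho> *\<^sub>R u)")
      case (real v)
      have "0 \<le> v"
        using assms(3) real by (metis ereal_less_eq(5))
      have "c * \<rho> \<le> v" if "R \<le> \<rho>"
        using growth[of "\<rho> *\<^sub>R u"] that \<open>norm u = 1\<close> \<open>0 < \<rho>\<close> real by simp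
      then show ?thesis
        using envelope_decay[OF assms(2) \<open>0 < c\<close> \<open>0 < R\<close> \<open>0 < \<rho>\<close> \<open>0 \<le> v\<close>, of "DIM('a) - 1"] real \<open>0 < \<rho>\<close>
        by (simp add: envelope_def \<kappa>_def q_def)
    qed (use assms(3) \<open>0 < \<rho>\<close> in \<open>auto simp: envelope_def \<kappa>_def\<close>)
  qed
qed

section \<open>Dominated convergence\<close>

lemma integral_dominated_convergence_at_right:
  fixes s :: "real \<Rightarrow> 'a \<Rightarrow> 'b::{banach, second_countable_topology}" and w :: "'a \<Rightarrow> real"
  assumes "f \<in> borel_measurable M" "integrable M w"
    and lim: "AE x in M. ((\<lambda>t. s t x) \<longlongrightarrow> f x) (at_right a)"
    and bound: "\<forall>\<^sub>F t in at_right a. s t \<in> borel_measurable M \<and> (AE x in M. norm (s t x) \<le> w x)"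
  shows "((\<lambda>t. integral\<^sup>L M (s t)) \<longlongrightarrow> integral\<^sup>L M f) (at_right a)"
proof -
  obtain b where "a < b"
    and b: "\<And>t. a < t \<Longrightarrow> t < b \<Longrightarrow> s t \<in> borel_measurable M \<and> (AE x in M. norm (s t x) \<le> w x)"
    using bound unfolding eventually_at_right_field by blast
  show ?thesis
  proof (rule tendsto_at_right_sequentially[OF \<open>a < b\<close>])
    fix S :: "nat \<Rightarrow> real"
    assume S: "\<And>n. a < S n" "\<And>n. S n < b" "S \<longlonglongrightarrow> a"
    then have "filterlim S (at_right a) sequentially"
      by (intro tendsto_imp_filterlim_at_right) auto
    show "(\<lambda>n. integral\<^sup>L M (s (S n))) \<longlonglongrightarrow> integral\<^sup>L M f"
    proof (rule integral_dominated_convergence[where w = w])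
      show "AE x in M. (\<lambda>n. s (S n) x) \<longlonglongrightarrow> f x"
        using lim by eventually_elim (rule filterlim_compose[OF _ \<open>filterlim S (at_right a) sequentially\<close>])
    qed (use assms(1,2) b S in auto)
  qed
qed

lemma sets_sphere_measure:
  "sets (sphere_measure :: 'a::euclidean_space measure) = sets (restrict_space borel (sphere 0 1))"
  by (simp add: sphere_measure_def)

lemma finite_measure_sphere_measure: "finite_measure (sphere_measure :: 'a::euclidean_space measure)"
proof (rule finite_measureI)
  define D :: "'a measure" where
    "D = density (restrict_space lborel (ball 0 1)) (\<lambda>_. ennreal (real DIM('a)))"
  have "space D = ball 0 1"
    by (simp add: D_def space_restrict_space)
  moreover have "emeasure D (ball 0 1) = (\<integral>\<^sup>+x. ennreal (real DIM('a)) * indicator (ball 0 1) x \<partial>restrict_space lborel (ball (0::'a) 1))"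
    unfolding D_def by (rule emeasure_density) (auto simp: sets_restrict_space_iff)
  ultimately have "emeasure D (space D) = (\<integral>\<^sup>+x. ennreal (real DIM('a)) * indicator (ball 0 1) x \<partial>restrict_space lborel (ball (0::'a) 1))"
    by simp
  also have "\<dots> = (\<integral>\<^sup>+x. ennreal (real DIM('a)) * indicator (ball (0::'a) 1) x \<partial>lborel)"
    by (subst nn_integral_restrict_space) (auto simp: indicator_def intro!: nn_integral_cong)
  also have "\<dots> = ennreal (real DIM('a)) * emeasure lborel (ball (0::'a) 1)"
    by (simp add: nn_integral_cmult_indicator)
  also have "\<dots> < \<infinity>"
    using emeasure_bounded_finite[of "ball (0::'a) 1"] by (simp add: ennreal_mult_less_top)
  finally have "emeasure D (space D) < \<infinity>" .
  moreover have "emeasure (sphere_measure :: 'a measure) (space sphere_measure) \<le> emeasure D (space D)"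
    unfolding sphere_measure_def D_def[symmetric] distr_def emeasure_measure_of_conv
    by (auto intro: emeasure_mono)
  ultimately show "emeasure (sphere_measure :: 'a measure) (space sphere_measure) \<noteq> \<infinity>"
    by auto
qed

locale dominated_hat_perturbation =
  fixes \<phi> :: "'a::euclidean_space \<Rightarrow> ereal" and \<alpha> \<beta>1 \<beta>2 :: real and G :: "real \<Rightarrow> real"
  assumes alpha_neg: "\<alpha> < 0" and beta1_nonneg: "0 \<le> \<beta>1"
    and conv: "\<phi> \<in> Conv" and nonneg: "\<forall>x. 0 \<le> \<phi> x"
    and integrable_G: "integrable lborel G" and G_nonneg: "\<And>\<rho>. 0 \<le> G \<rho>"
    and envelope_le_G: "\<And>u \<rho>. norm u = 1 \<Longrightarrow> 0 < \<rho> \<Longrightarrow> envelope \<alpha> (\<phi> (\<rho> *\<^sub>R u)) * \<rho> ^ (DIM('a) - 1) \<le> G \<rho>"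
begin

lemma borel_measurable_phi [measurable]: "\<phi> \<in> borel_measurable borel"
  using conv lsc_fn_borel_measurable unfolding Conv_def by blast

definition E_limit :: "'a \<Rightarrow> real" where
  "E_limit u = (LBINT \<rho>:{0<..}. hat_quotient_limit \<alpha> \<beta>1 \<beta>2 DIM('a) (\<phi> (\<rho> *\<^sub>R u)) * \<rho> ^ (DIM('a) - 1))"

lemma radial_hat_profile_integrable:
  assumes "norm u = 1" "0 \<le> t" "t \<le> t_max \<alpha> \<beta>1 \<beta>2"
  shows "integrable lborel (\<lambda>\<rho>. indicator {0<..} \<rho> * (hat_profile \<alpha> \<beta>1 \<beta>2 t (\<phi> (\<rho> *\<^sub>R u)) * \<rho> ^ (DIM('a) - 1)))"
proof (rule Bochner_Integration.integrable_bound[OF integrable_G])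
  have "\<bar>hat_profile \<alpha> \<beta>1 \<beta>2 t (\<phi> (\<rho> *\<^sub>R u))\<bar> * \<rho> ^ (DIM('a) - 1) \<le> G \<rho>" if "0 < \<rho>" for \<rho>
    using hat_profile_bound[OF alpha_neg beta1_nonneg _ assms(2,3)] nonneg envelope_le_G[OF assms(1) that] that
    by (meson mult_right_mono order_trans zero_le_power less_imp_le)
  then show "AE \<rho> in lborel. norm (indicator {0<..} \<rho> * (hat_profile \<alpha> \<beta>1 \<beta>2 t (\<phi> (\<rho> *\<^sub>R u)) * \<rho> ^ (DIM('a) - 1))) \<le> norm (G \<rho>)"
    using G_nonneg by (intro AE_I2) (auto simp: indicator_def abs_mult)
qed measurable

lemma radial_hat_quotient_bound:
  assumes "norm u = 1" "0 < t" "t \<le> t_max \<alpha> \<beta>1 \<beta>2"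
  shows "norm (indicator {0<..} \<rho> *\<^sub>R (hat_quotient \<alpha> \<beta>1 \<beta>2 DIM('a) t (\<phi> (\<rho> *\<^sub>R u)) * \<rho> ^ (DIM('a) - 1)))
    \<le> quotient_const \<alpha> \<beta>1 \<beta>2 DIM('a) * G \<rho>"
proof (cases "0 < \<rho>")
  case True
  have "\<bar>hat_quotient \<alpha> \<beta>1 \<beta>2 DIM('a) t (\<phi> (\<rho> *\<^sub>R u))\<bar> * \<rho> ^ (DIM('a) - 1)
      \<le> quotient_const \<alpha> \<beta>1 \<beta>2 DIM('a) * envelope \<alpha> (\<phi> (\<rho> *\<^sub>R u)) * \<rho> ^ (DIM('a) - 1)"
    using hat_quotient_bound[OF alpha_neg beta1_nonneg _ assms(2,3)] nonneg True
    by (intro mult_right_mono) auto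
  also have "\<dots> \<le> quotient_const \<alpha> \<beta>1 \<beta>2 DIM('a) * G \<rho>"
    using envelope_le_G[OF assms(1) True] quotient_const_nonneg[OF alpha_neg beta1_nonneg]
    by (simp add: mult.assoc mult_left_mono)
  finally show ?thesis
    using True by (simp add: abs_mult)
qed (simp add: G_nonneg quotient_const_nonneg[OF alpha_neg beta1_nonneg])

lemma E_fn_eq_radial_integral:
  assumes "norm u = 1" "0 < t" "t \<le> t_max \<alpha> \<beta>1 \<beta>2"
  shows "E_fn \<alpha> \<beta>1 \<beta>2 \<phi> t u = (LBINT \<rho>:{0<..}. hat_quotient \<alpha> \<beta>1 \<beta>2 DIM('a) t (\<phi> (\<rho> *\<^sub>R u)) * \<rho> ^ (DIM('a) - 1))"
proof -
  define C where "C = 1 + \<beta>1 * t"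
  have "0 < C"
    using beta1_nonneg assms(2) by (simp add: C_def add_pos_nonneg)
  define A where "A s \<rho> = indicator {0<..} \<rho> * (hat_profile \<alpha> \<beta>1 \<beta>2 s (\<phi> (\<rho> *\<^sub>R u)) * \<rho> ^ (DIM('a) - 1))" for s \<rho>
  have A: "integrable lborel (A t)" "integrable lborel (A 0)"
    unfolding A_def using radial_hat_profile_integrable[OF assms(1)] assms(2,3) t_max_pos[OF beta1_nonneg]
    by auto
  then have A_scaled: "integrable lborel (\<lambda>r. A t (r / C))"
    using lborel_integrable_real_affine[OF A(1), of "1 / C" 0] \<open>0 < C\<close> by simp
  have integral_A_scaled: "(\<integral>r. A t (r / C) \<partial>lborel) = C * (\<integral>\<rho>. A t \<rho> \<partial>lborel)"
    using lborel_integral_real_affine[of C "\<lambda>r. A t (r / C)" 0] \<open>0 < C\<close> by simp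
  have "C ^ (DIM('a) - 1) * C = C ^ DIM('a)"
    by (metis DIM_positive Suc_diff_1 power_Suc2)
  have integrand: "indicator {0<..} r *\<^sub>R ((hat_f \<alpha> \<beta>1 \<beta>2 \<phi> t (r *\<^sub>R u) - alpha_fn \<alpha> \<phi> (r *\<^sub>R u)) / t * r ^ (DIM('a) - 1))
      = (C ^ (DIM('a) - 1) * A t (r / C) - A 0 r) / t" for r
  proof -
    have "hat_f \<alpha> \<beta>1 \<beta>2 \<phi> t (r *\<^sub>R u) = hat_profile \<alpha> \<beta>1 \<beta>2 t (\<phi> ((r / C) *\<^sub>R u))"
      using hat_f_eq_hat_profile[OF conv nonneg beta1_nonneg, of t] assms(2)
      by (simp add: C_def divide_inverse_commute)
    moreover have "indicator {0<..} (r / C) = (indicator {0<..} r :: real)"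
      using \<open>0 < C\<close> by (simp add: indicator_def zero_less_divide_iff)
    moreover have "C ^ (DIM('a) - 1) * (r / C) ^ (DIM('a) - 1) = r ^ (DIM('a) - 1)"
      using \<open>0 < C\<close> by (simp add: power_divide)
    ultimately show ?thesis
      unfolding A_def alpha_fn_eq_hat_profile[of _ _ _ \<beta>1 \<beta>2]
      by (simp add: algebra_simps diff_divide_distrib)
  qed
  have "E_fn \<alpha> \<beta>1 \<beta>2 \<phi> t u = (\<integral>r. (C ^ (DIM('a) - 1) * A t (r / C) - A 0 r) / t \<partial>lborel)"
    unfolding E_fn_def set_lebesgue_integral_def integrand ..
  also have "\<dots> = (C ^ DIM('a) * (\<integral>\<rho>. A t \<rho> \<partial>lborel) - (\<integral>\<rho>. A 0 \<rho> \<partial>lborel)) / t"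
    using A A_scaled integral_A_scaled \<open>C ^ (DIM('a) - 1) * C = C ^ DIM('a)\<close>
    by (simp add: mult.assoc)
  also have "\<dots> = (\<integral>\<rho>. (C ^ DIM('a) * A t \<rho> - A 0 \<rho>) / t \<partial>lborel)"
    using A by simp
  also have "\<dots> = (LBINT \<rho>:{0<..}. hat_quotient \<alpha> \<beta>1 \<beta>2 DIM('a) t (\<phi> (\<rho> *\<^sub>R u)) * \<rho> ^ (DIM('a) - 1))"
    unfolding set_lebesgue_integral_def
    by (intro Bochner_Integration.integral_cong)
      (simp_all add: A_def C_def hat_quotient_def indicator_def algebra_simps diff_divide_distrib)
  finally show ?thesis .
qed


lemma eventually_below_t_max: "\<forall>\<^sub>F t in at_right 0. 0 < t \<and> t \<le> t_max \<alpha> \<beta>1 \<beta>2"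
  unfolding eventually_at_right_field
  using t_max_pos[OF beta1_nonneg, of \<alpha> \<beta>2] by (intro exI[of _ "t_max \<alpha> \<beta>1 \<beta>2"]) auto

lemma E_fn_tendsto:
  assumes "norm u = 1"
  shows "((\<lambda>t. E_fn \<alpha> \<beta>1 \<beta>2 \<phi> t u) \<longlongrightarrow> E_limit u) (at_right 0)"
proof -
  let ?q = "\<lambda>t \<rho>. indicator {0<..} \<rho> *\<^sub>R (hat_quotient \<alpha> \<beta>1 \<beta>2 DIM('a) t (\<phi> (\<rho> *\<^sub>R u)) * \<rho> ^ (DIM('a) - 1))"
  have "((\<lambda>t. integral\<^sup>L lborel (?q t)) \<longlongrightarrow> E_limit u) (at_right 0)"
    unfolding E_limit_def set_lebesgue_integral_def
  proof (rule integral_dominated_convergence_at_right[where w = "\<lambda>\<rho>. quotient_const \<alpha> \<beta>1 \<beta>2 DIM('a) * G \<rho>"])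
    show "integrable lborel (\<lambda>\<rho>. quotient_const \<alpha> \<beta>1 \<beta>2 DIM('a) * G \<rho>)"
      using integrable_G by simp
    show "AE \<rho> in lborel. ((\<lambda>t. ?q t \<rho>) \<longlongrightarrow> indicator {0<..} \<rho> *\<^sub>R
        (hat_quotient_limit \<alpha> \<beta>1 \<beta>2 DIM('a) (\<phi> (\<rho> *\<^sub>R u)) * \<rho> ^ (DIM('a) - 1))) (at_right 0)"
      using hat_quotient_tendsto[OF alpha_neg] nonneg by (intro AE_I2 tendsto_intros) auto
    show "\<forall>\<^sub>F t in at_right 0. ?q t \<in> borel_measurable lborel
        \<and> (AE \<rho> in lborel. norm (?q t \<rho>) \<le> quotient_const \<alpha> \<beta>1 \<beta>2 DIM('a) * G \<rho>)"
      using eventually_below_t_max by eventually_elim (use radial_hat_quotient_bound[OF assms] in auto)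
  qed measurable
  moreover have "\<forall>\<^sub>F t in at_right 0. integral\<^sup>L lborel (?q t) = E_fn \<alpha> \<beta>1 \<beta>2 \<phi> t u"
    using eventually_below_t_max
    by eventually_elim (simp add: E_fn_eq_radial_integral[OF assms] set_lebesgue_integral_def)
  ultimately show ?thesis
    by (rule Lim_transform_eventually)
qed

lemma E_fn_bound:
  assumes "norm u = 1" "0 < t" "t \<le> t_max \<alpha> \<beta>1 \<beta>2"
  shows "norm (E_fn \<alpha> \<beta>1 \<beta>2 \<phi> t u) \<le> quotient_const \<alpha> \<beta>1 \<beta>2 DIM('a) * integral\<^sup>L lborel G"
proof -
  let ?q = "\<lambda>\<rho>. indicator {0<..} \<rho> *\<^sub>R (hat_quotient \<alpha> \<beta>1 \<beta>2 DIM('a) t (\<phi> (\<rho> *\<^sub>R u)) * \<rho> ^ (DIM('a) - 1))"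
  have "integrable lborel (\<lambda>\<rho>. quotient_const \<alpha> \<beta>1 \<beta>2 DIM('a) * G \<rho>)"
    using integrable_G by simp
  moreover have "integrable lborel ?q"
  proof (rule Bochner_Integration.integrable_bound[OF calculation])
    show "AE \<rho> in lborel. norm (?q \<rho>) \<le> norm (quotient_const \<alpha> \<beta>1 \<beta>2 DIM('a) * G \<rho>)"
      using radial_hat_quotient_bound[OF assms] by (intro AE_I2) (metis abs_ge_self order_trans real_norm_def)
  qed measurable
  ultimately have "norm (integral\<^sup>L lborel ?q) \<le> (\<integral>\<rho>. quotient_const \<alpha> \<beta>1 \<beta>2 DIM('a) * G \<rho> \<partial>lborel)"
    using radial_hat_quotient_bound[OF assms] by (intro Bochner_Integration.integral_norm_bound_integral) auto
  then show ?thesis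
    using E_fn_eq_radial_integral[OF assms] by (simp add: set_lebesgue_integral_def)
qed

lemma E_fn_measurable:
  assumes "0 < t" "t \<le> t_max \<alpha> \<beta>1 \<beta>2"
  shows "(\<lambda>u. E_fn \<alpha> \<beta>1 \<beta>2 \<phi> t u) \<in> borel_measurable (restrict_space borel (sphere 0 1))"
proof -
  have "(\<lambda>u. LBINT \<rho>:{0<..}. hat_quotient \<alpha> \<beta>1 \<beta>2 DIM('a) t (\<phi> (\<rho> *\<^sub>R u)) * \<rho> ^ (DIM('a) - 1))
      \<in> borel_measurable (restrict_space borel (sphere 0 1))"
    unfolding set_lebesgue_integral_def by (intro measurable_restrict_space1) measurable
  then show ?thesis
    by (rule measurable_cong[THEN iffD1, rotated])
      (simp add: space_restrict_space E_fn_eq_radial_integral[OF _ assms])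
qed

lemma E_limit_measurable: "E_limit \<in> borel_measurable (restrict_space borel (sphere 0 1))"
  unfolding E_limit_def[abs_def] set_lebesgue_integral_def
  by (intro measurable_restrict_space1) measurable

theorem E_fn_integral_tendsto:
  assumes "finite_measure M" and sets_M: "sets M = sets (restrict_space borel (sphere (0::'a) 1))"
  shows "(AE u in M. \<exists>L. ((\<lambda>t. E_fn \<alpha> \<beta>1 \<beta>2 \<phi> t u) \<longlongrightarrow> L) (at_right 0))
    \<and> ((\<lambda>t. \<integral>u. E_fn \<alpha> \<beta>1 \<beta>2 \<phi> t u \<partial>M)
        \<longlongrightarrow> (\<integral>u. Lim (at_right 0) (\<lambda>t. E_fn \<alpha> \<beta>1 \<beta>2 \<phi> t u) \<partial>M)) (at_right 0)"
proof
  have sphere: "norm u = 1" if "u \<in> space M" for u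
    using that sets_eq_imp_space_eq[OF sets_M] by (simp add: space_restrict_space)
  show "AE u in M. \<exists>L. ((\<lambda>t. E_fn \<alpha> \<beta>1 \<beta>2 \<phi> t u) \<longlongrightarrow> L) (at_right 0)"
    using E_fn_tendsto sphere by (blast intro: AE_I2)
  have "(\<integral>u. Lim (at_right 0) (\<lambda>t. E_fn \<alpha> \<beta>1 \<beta>2 \<phi> t u) \<partial>M) = (\<integral>u. E_limit u \<partial>M)"
    using E_fn_tendsto sphere by (intro Bochner_Integration.integral_cong refl tendsto_Lim) auto
  moreover have "((\<lambda>t. \<integral>u. E_fn \<alpha> \<beta>1 \<beta>2 \<phi> t u \<partial>M) \<longlongrightarrow> (\<integral>u. E_limit u \<partial>M)) (at_right 0)"
  proof (rule integral_dominated_convergence_at_right[where w = "\<lambda>_. quotient_const \<alpha> \<beta>1 \<beta>2 DIM('a) * integral\<^sup>L lborel G"])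
    show "E_limit \<in> borel_measurable M"
      using E_limit_measurable by (simp add: measurable_cong_sets[OF sets_M refl])
    show "integrable M (\<lambda>_. quotient_const \<alpha> \<beta>1 \<beta>2 DIM('a) * integral\<^sup>L lborel G)"
      using assms(1) by (rule finite_measure.integrable_const)
    show "AE u in M. ((\<lambda>t. E_fn \<alpha> \<beta>1 \<beta>2 \<phi> t u) \<longlongrightarrow> E_limit u) (at_right 0)"
      using E_fn_tendsto sphere by (blast intro: AE_I2)
    show "\<forall>\<^sub>F t in at_right 0. (\<lambda>u. E_fn \<alpha> \<beta>1 \<beta>2 \<phi> t u) \<in> borel_measurable M
        \<and> (AE u in M. norm (E_fn \<alpha> \<beta>1 \<beta>2 \<phi> t u) \<le> quotient_const \<alpha> \<beta>1 \<beta>2 DIM('a) * integral\<^sup>L lborel G)"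
      using eventually_below_t_max
      by eventually_elim
        (use E_fn_measurable E_fn_bound sphere in \<open>auto simp: measurable_cong_sets[OF sets_M refl] intro: AE_I2\<close>)
  qed
  ultimately show "((\<lambda>t. \<integral>u. E_fn \<alpha> \<beta>1 \<beta>2 \<phi> t u \<partial>M)
      \<longlongrightarrow> (\<integral>u. Lim (at_right 0) (\<lambda>t. E_fn \<alpha> \<beta>1 \<beta>2 \<phi> t u) \<partial>M)) (at_right 0)"
    by simp
qed

end

theorem lemma3p5:
  fixes \<phi> :: "'a::euclidean_space \<Rightarrow> ereal"
    and \<alpha> \<beta>1 \<beta>2 :: real
  assumes "- 1 / real DIM('a) < \<alpha>" and "\<alpha> < 0"
    and "\<beta>1 \<ge> 0"
    and "\<phi> \<in> Conv" and "\<forall>x. \<phi> x \<ge> 0" and "coercive \<phi>"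
    and "0 \<in> interior (Kset \<phi>)"
  shows "(AE u in sphere_measure.
            \<exists>L. ((\<lambda>t. E_fn \<alpha> \<beta>1 \<beta>2 \<phi> t u) \<longlongrightarrow> L) (at_right 0))
     \<and> ((\<lambda>t. \<integral>u. E_fn \<alpha> \<beta>1 \<beta>2 \<phi> t u \<partial>sphere_measure)
          \<longlongrightarrow> (\<integral>u. Lim (at_right 0) (\<lambda>t. E_fn \<alpha> \<beta>1 \<beta>2 \<phi> t u) \<partial>sphere_measure))
         (at_right 0)"
proof -
  obtain G where "integrable lborel G" "\<And>\<rho>. 0 \<le> G \<rho>"
    "\<And>u \<rho>. norm u = 1 \<Longrightarrow> 0 < \<rho> \<Longrightarrow> envelope \<alpha> (\<phi> (\<rho> *\<^sub>R u)) * \<rho> ^ (DIM('a) - 1) \<le> G \<rho>"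
    using radial_envelope_dominated[OF assms(1,2,5,6)] by blast
  then interpret dominated_hat_perturbation \<phi> \<alpha> \<beta>1 \<beta>2 G
    using assms(2-5) by unfold_locales auto
  show ?thesis
    by (rule E_fn_integral_tendsto[OF finite_measure_sphere_measure sets_sphere_measure])
qed

end
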